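(* Let $u>0$. Let $c(u)$ be the smallest positive solution $c$, with $0<uc<1/e$, of $uc\,T_1'(uc)-T_1(uc)=u$, and let $\alpha(u)$ be the smallest positive solution of $\alpha e^{-\alpha}=\frac{1}{(1+u)e}$. Then $$\frac{c(u)}{1+\frac1u T_1(uc(u))}=\alpha(u).$$ In particular the lower bound $\frac{c(u)}{1+\frac1u T_1(uc(u))}C(\beta)^{-1}$ on the radius of convergence of the virial expansion equals Groeneveld's bound $\alpha(u)C(\beta)^{-1}$.
   Context: $T_1(z):=z+\sum_{n\ge1}n^n\frac{z^{n+1}}{(n+1)!}$, a power series with radius of convergence $1/e$; $T_1'$ is its derivative. $C(\beta)=\int_{\mathbb R^d}|e^{-\beta\phi(x)}-1|\,dx$ for the pair potential $\phi$. *)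

theory Defs
  imports "HOL-Analysis.Analysis"
begin

text \<open>T_1(z) = z + sum_{n>=1} n^n z^(n+1)/(n+1)!  (re-indexed with n = Suc k).\<close>
definition T1 :: "real \<Rightarrow> real" where
  "T1 z = z + (\<Sum>k. real (Suc k) ^ Suc k * z ^ (k + 2) / fact (k + 2))"

definition c_of :: "real \<Rightarrow> real" where
  "c_of u = (LEAST c. 0 < c \<and> 0 < u * c \<and> u * c < exp (-1) \<and>
       u * c * deriv T1 (u * c) - T1 (u * c) = u)"

definition alpha_of :: "real \<Rightarrow> real" where
  "alpha_of u = (LEAST a. 0 < a \<and> a * exp (- a) = 1 / ((1 + u) * exp 1))"

end

theory Submission
  imports Defs
begin

text \<open>
  With the tree function \<open>T(z) = \<Sum>n\<ge>1. n\<^sup>n\<^sup>-\<^sup>1 z\<^sup>n / n!\<close> and \<open>B(z) = \<Sum>n\<ge>0. n\<^sup>n z\<^sup>n / n!\<close>,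
  Abel's identity gives \<open>B (1 - T) = 1\<close>; since \<open>z T' = B - 1\<close> this makes \<open>T e\<^sup>-\<^sup>T - z\<close>
  and \<open>T\<^sub>1 - (1 - e\<^sup>-\<^sup>T)\<close> solutions of linear ODEs vanishing at 0, so \<open>T e\<^sup>-\<^sup>T = z\<close> and
  \<open>T\<^sub>1 = 1 - e\<^sup>-\<^sup>T\<close> on \<open>[0, 1/e)\<close>. As \<open>T\<^sub>1' = B\<close>, the equation defining \<open>c(u)\<close> becomes
  \<open>e\<^sup>-\<^sup>s = (1 + u)(1 - s)\<close> for \<open>s = T(u c)\<close>, which has a unique root \<open>s \<in> (0,1)\<close>.
  Then \<open>u c = s e\<^sup>-\<^sup>s\<close>, \<open>1 + T\<^sub>1(u c)/u = (1 + u) s / u\<close>, and the quotient is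
  \<open>e\<^sup>-\<^sup>s / (1 + u) = 1 - s\<close>, which solves Groeneveld's equation
  \<open>\<alpha> e\<^sup>-\<^sup>\<alpha> = 1 / ((1 + u) e)\<close>; minimality holds because \<open>x e\<^sup>-\<^sup>x\<close> increases on \<open>[0,1]\<close>.
\<close>

section \<open>Abel's identity\<close>

definition alt_binomial_sum :: "nat \<Rightarrow> (nat \<Rightarrow> real) \<Rightarrow> real" where
  "alt_binomial_sum n f = (\<Sum>k\<le>n. (-1)^k * real (n choose k) * f k)"

lemma alt_binomial_sum_Suc:
  "alt_binomial_sum (Suc n) f = alt_binomial_sum n f - alt_binomial_sum n (\<lambda>k. f (Suc k))"
proof -
  have "alt_binomial_sum (Suc n) f =
      f 0 + (\<Sum>k\<le>n. (-1)^(Suc k) * real (Suc n choose Suc k) * f (Suc k))"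
    unfolding alt_binomial_sum_def by (subst sum.atMost_Suc_shift) simp
  also have "\<dots> = f 0 - (\<Sum>k\<le>n. (-1)^k * real (n choose k) * f (Suc k))
                   - (\<Sum>k\<le>n. (-1)^k * real (n choose Suc k) * f (Suc k))"
    by (simp add: sum_subtractf[symmetric] sum.distrib[symmetric] algebra_simps)
  also have "(\<Sum>k\<le>n. (-1)^k * real (n choose Suc k) * f (Suc k)) = f 0 - alt_binomial_sum n f"
  proof -
    have "alt_binomial_sum n f = f 0 + (\<Sum>k<n. (-1)^(Suc k) * real (n choose Suc k) * f (Suc k))"
      unfolding alt_binomial_sum_def by (subst sum.atMost_shift) simp
    moreover have "(\<Sum>k\<le>n. (-1)^k * real (n choose Suc k) * f (Suc k)) =
        (\<Sum>k<n. (-1)^k * real (n choose Suc k) * f (Suc k))"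
      by (simp add: lessThan_Suc_atMost[symmetric])
    ultimately show ?thesis by (simp add: sum_negf[symmetric])
  qed
  finally show ?thesis unfolding alt_binomial_sum_def by simp
qed

text \<open>The \<open>n\<close>-th finite difference kills polynomials of degree \<open>< n\<close>.\<close>

lemma alt_binomial_sum_power_eq_0:
  "j < n \<Longrightarrow> alt_binomial_sum n (\<lambda>k. (real k + a) ^ j) = 0"
proof (induction n arbitrary: j a)
  case 0
  then show ?case by simp
next
  case (Suc n)
  have diff_eq: "(real k + a) ^ j - (real (Suc k) + a) ^ j =
      - (\<Sum>i<j. real (j choose i) * (real k + a) ^ i)" for k
  proof -
    have "(real (Suc k) + a) ^ j = (\<Sum>i\<le>j. real (j choose i) * (real k + a) ^ i)"
      using binomial_ring[of "real k + a" 1 j] by (simp add: algebra_simps)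
    also have "\<dots> = (\<Sum>i<j. real (j choose i) * (real k + a) ^ i) + (real k + a) ^ j"
      by (simp add: lessThan_Suc_atMost[symmetric])
    finally show ?thesis by simp
  qed
  have "alt_binomial_sum (Suc n) (\<lambda>k. (real k + a) ^ j) =
      alt_binomial_sum n (\<lambda>k. (real k + a) ^ j - (real (Suc k) + a) ^ j)"
    by (subst alt_binomial_sum_Suc)
       (simp add: alt_binomial_sum_def sum_subtractf[symmetric] algebra_simps)
  also have "\<dots> = - (\<Sum>i<j. real (j choose i) * alt_binomial_sum n (\<lambda>k. (real k + a) ^ i))"
    unfolding diff_eq
    by (simp add: alt_binomial_sum_def sum_negf sum_distrib_left sum_distrib_right
        sum.swap[of _ "{..<j}"] algebra_simps)
  also have "\<dots> = 0"
    using Suc by simp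
  finally show ?case .
qed

definition abel_sum :: "nat \<Rightarrow> real \<Rightarrow> real" where
  "abel_sum n y = (\<Sum>k<n. real (n choose k) * (y + real k) ^ k * real (n - k) ^ (n - k - 1))"

lemma has_field_derivative_abel_sum:
  "(abel_sum (Suc m) has_field_derivative real (Suc m) * abel_sum m (y + 1)) (at y)"
proof -
  have "(abel_sum (Suc m) has_field_derivative
      (\<Sum>k<Suc m. real (Suc m choose k) * (real k * (y + real k) ^ (k - 1)) *
                   real (Suc m - k) ^ (Suc m - k - 1))) (at y)"
    unfolding abel_sum_def[abs_def]
    by (rule DERIV_sum, intro DERIV_cmult DERIV_cmult_right)
       (rule derivative_eq_intros refl | simp)+
  also have "(\<Sum>k<Suc m. real (Suc m choose k) * (real k * (y + real k) ^ (k - 1)) *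
                   real (Suc m - k) ^ (Suc m - k - 1)) =
      (\<Sum>k<m. (real (Suc m choose Suc k) * real (Suc k)) *
               ((y + 1 + real k) ^ k * real (m - k) ^ (m - k - 1)))"
    by (subst sum.lessThan_Suc_shift) (simp add: algebra_simps)
  also have "\<dots> = real (Suc m) * abel_sum m (y + 1)"
  proof -
    have "real (Suc m choose Suc k) * real (Suc k) = real (Suc m) * real (m choose k)" for k
      using Suc_times_binomial[of k m] by (metis mult.commute of_nat_mult)
    then show ?thesis
      unfolding abel_sum_def sum_distrib_left by (simp add: mult.assoc)
  qed
  finally show ?thesis .
qed

lemma abel_sum_at_neg:
  assumes "N \<ge> 2"
  shows "abel_sum N (- real N) = 0"
proof -
  have "abel_sum N (- real N) =
      (\<Sum>k<N. (-1)^(N - 1) * ((-1)^k * real (N choose k) * (real k + - real N) ^ (N - 1)))"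
    unfolding abel_sum_def
  proof (intro sum.cong refl)
    fix k assume "k \<in> {..<N}"
    then have "k < N" by simp
    then have pow1: "(- real N + real k) ^ k = (-1)^k * real (N - k) ^ k"
      and pow2: "(real k + - real N) ^ (N - 1) = (-1)^(N - 1) * real (N - k) ^ (N - 1)"
      and pow3: "real (N - k) ^ k * real (N - k) ^ (N - k - 1) = real (N - k) ^ (N - 1)"
      by (simp_all add: of_nat_diff power_add[symmetric] power_mult_distrib[symmetric])
    have sign: "((-1::real)^(N - 1)) * (-1)^(N - 1) = 1"
      by (simp flip: power_mult_distrib)
    have "(-1)^(N - 1) * ((-1)^k * real (N choose k) *
          ((-1)^(N - 1) * (real (N - k) ^ k * real (N - k) ^ (N - k - 1)))) =
        ((-1::real)^(N - 1) * (-1)^(N - 1)) *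
          (real (N choose k) * ((-1)^k * real (N - k) ^ k) * real (N - k) ^ (N - k - 1))"
      by (simp only: mult_ac)
    then show "real (N choose k) * (- real N + real k) ^ k * real (N - k) ^ (N - k - 1) =
        (-1)^(N - 1) * ((-1)^k * real (N choose k) * (real k + - real N) ^ (N - 1))"
      unfolding pow1 pow2 pow3[symmetric] sign by simp
  qed
  also have "\<dots> = (-1)^(N - 1) * alt_binomial_sum N (\<lambda>k. (real k + - real N) ^ (N - 1))"
    unfolding alt_binomial_sum_def using assms
    by (simp add: sum_distrib_left lessThan_Suc_atMost[symmetric] power_0_left)
  also have "\<dots> = 0"
    using alt_binomial_sum_power_eq_0[of "N - 1" N "- real N"] assms by simp
  finally show ?thesis .
qed

text \<open>
  A generalised Abel identity: both sides have derivative \<open>(n+1) n (y + n + 1)\<^sup>n\<^sup>-\<^sup>1\<close>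
  by induction, and they agree at \<open>y = -(n+1)\<close>.
\<close>

lemma abel_sum_eq: "abel_sum (Suc n) y = real (Suc n) * (y + real (Suc n)) ^ n"
proof (induction n arbitrary: y)
  case 0
  then show ?case by (simp add: abel_sum_def)
next
  case (Suc n)
  define F where "F y = abel_sum (Suc (Suc n)) y - real (Suc (Suc n)) * (y + real (Suc (Suc n))) ^ Suc n"
    for y
  have "(F has_field_derivative 0) (at y)" for y
  proof -
    have "(F has_field_derivative (real (Suc (Suc n)) * abel_sum (Suc n) (y + 1)
        - real (Suc (Suc n)) * (real (Suc n) * (y + real (Suc (Suc n))) ^ n))) (at y)"
      unfolding F_def[abs_def]
      by (rule derivative_eq_intros has_field_derivative_abel_sum refl | simp)+
    moreover have "abel_sum (Suc n) (y + 1) = real (Suc n) * (y + real (Suc (Suc n))) ^ n"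
      using Suc.IH[of "y + 1"] by (simp add: algebra_simps)
    ultimately show ?thesis by simp
  qed
  then have "F y = F (- real (Suc (Suc n)))"
    by (intro DERIV_isconst_all) auto
  also have "\<dots> = 0"
    unfolding F_def using abel_sum_at_neg[of "Suc (Suc n)"] by simp
  finally show ?case unfolding F_def by simp
qed

section \<open>The tree function\<close>

definition self_power_coeff :: "nat \<Rightarrow> real" where
  "self_power_coeff n = real n ^ n / fact n"

text \<open>The guard avoids \<open>0 ^ (0 - 1) = 1\<close> in the constant term.\<close>

definition tree_coeff :: "nat \<Rightarrow> real" where
  "tree_coeff n = (if n = 0 then 0 else real n ^ (n - 1) / fact n)"

definition T1_coeff :: "nat \<Rightarrow> real" where
  "T1_coeff n = (case n of 0 \<Rightarrow> 0 | Suc m \<Rightarrow> self_power_coeff m / real (Suc m))"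

definition self_power_series :: "real \<Rightarrow> real" where
  "self_power_series x = (\<Sum>n. self_power_coeff n * x ^ n)"

definition tree_fn :: "real \<Rightarrow> real" where
  "tree_fn x = (\<Sum>n. tree_coeff n * x ^ n)"

definition tree_fn_deriv :: "real \<Rightarrow> real" where
  "tree_fn_deriv x = (\<Sum>n. self_power_coeff (Suc n) * x ^ n)"

lemma self_power_coeff_nonneg: "0 \<le> self_power_coeff n"
  unfolding self_power_coeff_def by simp

lemma tree_coeff_nonneg: "0 \<le> tree_coeff n"
  unfolding tree_coeff_def by simp

lemma tree_coeff_le_self_power_coeff: "tree_coeff n \<le> self_power_coeff n"
proof (cases "n = 0")
  case False
  then have "real n ^ (n - 1) \<le> real n ^ n"
    by (intro power_increasing) auto
  with False show ?thesis
    unfolding tree_coeff_def self_power_coeff_def by (simp add: divide_right_mono)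
qed (simp add: tree_coeff_def self_power_coeff_def)

lemma Suc_power_le_exp_1_mult_power: "real (Suc n) ^ n \<le> exp 1 * real n ^ n"
proof (cases "n = 0")
  case False
  then have n_pos: "real n > 0" by simp
  have "real (Suc n) = real n * (1 + 1 / real n)"
    using n_pos by (simp add: field_simps)
  then have "real (Suc n) ^ n = real n ^ n * (1 + 1 / real n) ^ n"
    by (simp add: power_mult_distrib)
  also have "(1 + 1 / real n) ^ n \<le> exp (1 / real n) ^ n"
    by (intro power_mono) (use n_pos in auto)
  also have "exp (1 / real n) ^ n = exp 1"
    using n_pos by (simp flip: exp_of_nat_mult)
  finally show ?thesis using n_pos by (simp add: mult.commute mult_left_mono)
qed simp

lemma self_power_coeff_Suc_le: "self_power_coeff (Suc n) \<le> exp 1 * self_power_coeff n"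
proof -
  have "self_power_coeff (Suc n) = real (Suc n) ^ n / fact n"
    unfolding self_power_coeff_def by (simp add: fact_Suc field_simps del: of_nat_Suc)
  also have "\<dots> \<le> exp 1 * real n ^ n / fact n"
    by (rule divide_right_mono[OF Suc_power_le_exp_1_mult_power]) simp
  finally show ?thesis unfolding self_power_coeff_def by simp
qed

lemma summable_self_power_series:
  assumes "\<bar>x\<bar> < exp (-1)"
  shows "summable (\<lambda>n. norm (self_power_coeff n * x ^ n))"
proof (rule summable_ratio_test[where c = "exp 1 * \<bar>x\<bar>" and N = 0])
  have "exp 1 * \<bar>x\<bar> < exp 1 * exp (-1)"
    using assms by simp
  then show "exp 1 * \<bar>x\<bar> < 1"
    by (simp add: exp_minus)
  fix n :: nat
  have "self_power_coeff (Suc n) * \<bar>x\<bar> ^ Suc n \<le> (exp 1 * self_power_coeff n) * \<bar>x\<bar> ^ Suc n"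
    by (intro mult_right_mono self_power_coeff_Suc_le) simp
  then show "norm (norm (self_power_coeff (Suc n) * x ^ Suc n)) \<le>
      exp 1 * \<bar>x\<bar> * norm (norm (self_power_coeff n * x ^ n))"
    by (simp add: abs_mult power_abs self_power_coeff_nonneg mult_ac)
qed

lemma summable_tree_fn:
  assumes "\<bar>x\<bar> < exp (-1)"
  shows "summable (\<lambda>n. norm (tree_coeff n * x ^ n))"
  by (rule summable_comparison_test[OF _ summable_self_power_series[OF assms]],
      intro exI[of _ 0] allI impI)
     (simp add: abs_mult abs_of_nonneg tree_coeff_nonneg self_power_coeff_nonneg
        mult_right_mono tree_coeff_le_self_power_coeff)

lemma summable_T1_coeff:
  assumes "\<bar>x\<bar> < exp (-1)"
  shows "summable (\<lambda>n. norm (T1_coeff n * x ^ n))"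
proof -
  have "summable (\<lambda>n. norm (T1_coeff (Suc n) * x ^ Suc n))"
  proof (rule summable_comparison_test[OF _ summable_mult[OF summable_self_power_series[OF assms]]],
         intro exI allI impI)
    fix n :: nat
    have "norm (norm (T1_coeff (Suc n) * x ^ Suc n)) = self_power_coeff n / real (Suc n) * \<bar>x\<bar> ^ Suc n"
      by (simp add: T1_coeff_def abs_mult power_abs self_power_coeff_nonneg del: of_nat_Suc)
    also have "\<dots> \<le> self_power_coeff n * \<bar>x\<bar> ^ Suc n"
      using self_power_coeff_nonneg[of n]
      by (intro mult_right_mono) (simp_all add: divide_le_eq mult_le_cancel_left1 del: of_nat_Suc)
    also have "\<dots> = \<bar>x\<bar> * norm (self_power_coeff n * x ^ n)"
      by (simp add: abs_mult power_abs self_power_coeff_nonneg)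
    finally show "norm (norm (T1_coeff (Suc n) * x ^ Suc n)) \<le> \<bar>x\<bar> * norm (self_power_coeff n * x ^ n)" .
  qed
  then show ?thesis
    by (subst (asm) summable_Suc_iff)
qed

lemma T1_eq_powser:
  assumes "\<bar>z\<bar> < exp (-1)"
  shows "T1 z = (\<Sum>n. T1_coeff n * z ^ n)"
proof -
  have summable: "summable (\<lambda>n. T1_coeff n * z ^ n)"
    using summable_norm_cancel[OF summable_T1_coeff[OF assms]] .
  have "T1_coeff (k + 2) * z ^ (k + 2) = real (Suc k) ^ Suc k * z ^ (k + 2) / fact (k + 2)" for k
    by (simp add: T1_coeff_def self_power_coeff_def fact_Suc field_simps del: of_nat_Suc)
  moreover have "(\<Sum>i<2. T1_coeff i * z ^ i) = z"
    by (simp add: T1_coeff_def self_power_coeff_def numeral_2_eq_2)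
  ultimately show ?thesis
    unfolding T1_def suminf_split_initial_segment[OF summable, of 2] by simp
qed

lemma has_field_derivative_T1:
  assumes "\<bar>x\<bar> < exp (-1)"
  shows "(T1 has_field_derivative self_power_series x) (at x)"
proof -
  have "diffs T1_coeff = self_power_coeff"
    by (rule ext) (simp add: diffs_def T1_coeff_def del: of_nat_Suc)
  moreover have "((\<lambda>z. \<Sum>n. T1_coeff n * z ^ n) has_field_derivative
      (\<Sum>n. diffs T1_coeff n * x ^ n)) (at x)"
    by (rule termdiffs_strong'[where K = "exp (-1)"])
       (use assms summable_norm_cancel[OF summable_T1_coeff] in auto)
  ultimately have "((\<lambda>z. \<Sum>n. T1_coeff n * z ^ n) has_field_derivative self_power_series x) (at x)"
    by (simp add: self_power_series_def)
  moreover have "open {z::real. \<bar>z\<bar> < exp (-1)}"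
    by (rule open_Collect_less) (intro continuous_intros)+
  ultimately show ?thesis
    by (rule has_field_derivative_transform_within_open) (use assms T1_eq_powser in auto)
qed

lemma has_field_derivative_tree_fn:
  assumes "\<bar>x\<bar> < exp (-1)"
  shows "(tree_fn has_field_derivative tree_fn_deriv x) (at x)"
proof -
  have "diffs tree_coeff n = self_power_coeff (Suc n)" for n
    by (simp add: diffs_def tree_coeff_def self_power_coeff_def fact_Suc field_simps del: of_nat_Suc)
  moreover have "((\<lambda>z. \<Sum>n. tree_coeff n * z ^ n) has_field_derivative
      (\<Sum>n. diffs tree_coeff n * x ^ n)) (at x)"
    by (rule termdiffs_strong'[where K = "exp (-1)"])
       (use assms summable_norm_cancel[OF summable_tree_fn] in auto)
  ultimately show ?thesis
    by (simp add: tree_fn_deriv_def tree_fn_def[abs_def])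
qed

lemma mult_tree_fn_deriv:
  assumes "\<bar>x\<bar> < exp (-1)"
  shows "x * tree_fn_deriv x = self_power_series x - 1"
  using powser_split_head(2)[OF summable_norm_cancel[OF summable_self_power_series[OF assms]]]
  by (simp add: tree_fn_deriv_def self_power_series_def self_power_coeff_def mult.commute)

lemma self_power_coeff_convolution:
  assumes "k \<ge> 1"
  shows "(\<Sum>i\<le>k. self_power_coeff i * tree_coeff (k - i)) = self_power_coeff k"
proof -
  have "(\<Sum>i\<le>k. self_power_coeff i * tree_coeff (k - i)) =
      (\<Sum>i<k. self_power_coeff i * tree_coeff (k - i))"
    by (simp add: lessThan_Suc_atMost[symmetric] tree_coeff_def)
  also have "\<dots> = (\<Sum>i<k. real (k choose i) * (0 + real i) ^ i * real (k - i) ^ (k - i - 1)) / fact k"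
    unfolding sum_divide_distrib
  proof (intro sum.cong refl)
    fix i assume "i \<in> {..<k}"
    then have "i < k" by simp
    then show "self_power_coeff i * tree_coeff (k - i) =
        real (k choose i) * (0 + real i) ^ i * real (k - i) ^ (k - i - 1) / fact k"
      by (simp add: binomial_fact self_power_coeff_def tree_coeff_def)
  qed
  also have "\<dots> = abel_sum k 0 / fact k"
    by (simp add: abel_sum_def)
  also have "abel_sum k 0 = real k ^ k"
    using abel_sum_eq[of "k - 1" 0] assms by (cases k) simp_all
  finally show ?thesis
    by (simp add: self_power_coeff_def)
qed

lemma self_power_series_mult_one_minus_tree_fn:
  assumes "\<bar>x\<bar> < exp (-1)"
  shows "self_power_series x * (1 - tree_fn x) = 1"
proof -
  have "self_power_series x * tree_fn x =
      (\<Sum>k. \<Sum>i\<le>k. (self_power_coeff i * x ^ i) * (tree_coeff (k - i) * x ^ (k - i)))"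
    unfolding self_power_series_def tree_fn_def
    by (rule Cauchy_product[OF summable_self_power_series[OF assms] summable_tree_fn[OF assms]])
  also have "\<dots> = (\<Sum>k. self_power_coeff k * x ^ k - (if k = 0 then 1 else 0))"
  proof (intro suminf_cong)
    fix k
    have "(\<Sum>i\<le>k. (self_power_coeff i * x ^ i) * (tree_coeff (k - i) * x ^ (k - i))) =
        (\<Sum>i\<le>k. self_power_coeff i * tree_coeff (k - i)) * x ^ k"
      unfolding sum_distrib_right
      by (intro sum.cong refl) (simp add: mult_ac flip: power_add)
    then show "(\<Sum>i\<le>k. (self_power_coeff i * x ^ i) * (tree_coeff (k - i) * x ^ (k - i))) =
        self_power_coeff k * x ^ k - (if k = 0 then 1 else 0)"
      using self_power_coeff_convolution[of k]
      by (cases "k = 0") (simp_all add: self_power_coeff_def tree_coeff_def)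
  qed
  also have "\<dots> = self_power_series x - 1"
    using sums_diff[OF summable_sums[OF summable_norm_cancel[OF summable_self_power_series[OF assms]]]
        sums_single[of 0 "\<lambda>_. 1::real"]]
    by (simp add: sums_iff self_power_series_def)
  finally show ?thesis
    by (simp add: algebra_simps)
qed

lemma tree_fn_0 [simp]: "tree_fn 0 = 0"
  unfolding tree_fn_def using powser_zero[of tree_coeff] by (simp add: tree_coeff_def)

lemma tree_fn_deriv_0 [simp]: "tree_fn_deriv 0 = 1"
  unfolding tree_fn_deriv_def using powser_zero[of "\<lambda>n. self_power_coeff (Suc n)"]
  by (simp add: self_power_coeff_def)

lemma T1_0 [simp]: "T1 0 = 0"
  unfolding T1_def by simp

lemma tree_fn_pos:
  assumes "0 < x" "x < exp (-1)"
  shows "0 < tree_fn x"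
  unfolding tree_fn_def
  by (rule suminf_pos2[where i = 1])
     (use assms summable_norm_cancel[OF summable_tree_fn, of x] in
      \<open>auto simp: tree_coeff_nonneg tree_coeff_def\<close>)

lemma tree_fn_nonneg:
  assumes "0 \<le> x" "x < exp (-1)"
  shows "0 \<le> tree_fn x"
  unfolding tree_fn_def
  by (rule suminf_nonneg)
     (use assms summable_norm_cancel[OF summable_tree_fn, of x] in \<open>auto simp: tree_coeff_nonneg\<close>)

lemma tree_fn_less_1:
  assumes "0 \<le> x" "x < exp (-1)"
  shows "tree_fn x < 1"
proof -
  have "0 < self_power_series x"
    unfolding self_power_series_def
    by (rule suminf_pos2[where i = 0])
       (use assms summable_norm_cancel[OF summable_self_power_series, of x] in
        \<open>auto simp: self_power_coeff_nonneg self_power_coeff_def\<close>)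
  moreover have "self_power_series x * (1 - tree_fn x) = 1"
    using self_power_series_mult_one_minus_tree_fn[of x] assms by simp
  ultimately show ?thesis
    by (metis diff_gt_0_iff_gt zero_less_mult_pos zero_less_one)
qed

text \<open>Solutions of \<open>y h'(y) = h(y)\<close> are \<open>h(y) = C y\<close>, and \<open>h'(0) = 0\<close> forces \<open>C = 0\<close>.\<close>

lemma euler_equation_solution_eq_0:
  fixes h h' :: "real \<Rightarrow> real"
  assumes deriv: "\<And>y. 0 \<le> y \<Longrightarrow> y < b \<Longrightarrow> (h has_field_derivative h' y) (at y)"
    and euler: "\<And>y. 0 \<le> y \<Longrightarrow> y < b \<Longrightarrow> y * h' y = h y"
    and "h' 0 = 0" "0 \<le> x" "x < b"
  shows "h x = 0"
proof (cases "x = 0")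
  case True
  then show ?thesis using euler[of 0] assms by simp
next
  case False
  with assms have x_pos: "0 < x" by simp
  define k where "k y = h y / y" for y
  have k_const: "k y = k x" if "0 < y" "y < x" for y
  proof (rule DERIV_isconst_end[OF that(2), symmetric])
    show "continuous_on {y..x} k"
      unfolding k_def
      by (intro continuous_on_divide continuous_at_imp_continuous_on ballI DERIV_isCont[OF deriv]
          continuous_on_id) (use that assms in auto)
    fix t assume "y < t" "t < x"
    then have "(k has_field_derivative (h' t * t - h t * 1) / (t * t)) (at t)"
      unfolding k_def[abs_def] using that assms
      by (intro DERIV_divide deriv DERIV_ident) auto
    moreover have "h' t * t - h t * 1 = 0"
      using euler[of t] \<open>y < t\<close> \<open>t < x\<close> that assms by (simp add: mult.commute)
    ultimately show "(k has_field_derivative 0) (at t)" by simp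
  qed
  have "h 0 = 0"
    using euler[of 0] assms by simp
  then have "(k \<longlongrightarrow> h' 0) (at 0)"
    using DERIV_D[OF deriv[of 0]] assms unfolding k_def[abs_def] by simp
  then have "(k \<longlongrightarrow> 0) (at_right 0)"
    using assms by (simp add: filterlim_at_split)
  moreover have "eventually (\<lambda>t. k t = k x) (at_right 0)"
    using eventually_at_right_real[OF x_pos] by eventually_elim (auto intro: k_const)
  ultimately have "((\<lambda>t. k x) \<longlongrightarrow> 0) (at_right (0::real))"
    by (rule Lim_transform_eventually)
  then have "k x = 0"
    by (simp add: tendsto_const_iff)
  then show ?thesis
    unfolding k_def using x_pos by simp
qed

lemma tree_fn_mult_exp:
  assumes "0 \<le> x" "x < exp (-1)"
  shows "tree_fn x * exp (- tree_fn x) = x"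
proof -
  define h where "h y = tree_fn y * exp (- tree_fn y) - y" for y
  define h' where "h' y = tree_fn_deriv y * exp (- tree_fn y) * (1 - tree_fn y) - 1" for y
  have "h x = 0"
  proof (rule euler_equation_solution_eq_0[of "exp (-1)" h h'])
    fix y :: real assume "0 \<le> y" "y < exp (-1)"
    then have y: "\<bar>y\<bar> < exp (-1)" by simp
    show "(h has_field_derivative h' y) (at y)"
      unfolding h_def[abs_def] h'_def
      by (rule derivative_eq_intros has_field_derivative_tree_fn[OF y] refl | simp)+
         (simp add: algebra_simps)
    have "y * h' y = (y * tree_fn_deriv y) * (1 - tree_fn y) * exp (- tree_fn y) - y"
      unfolding h'_def by (simp add: algebra_simps)
    also have "\<dots> = (self_power_series y - 1) * (1 - tree_fn y) * exp (- tree_fn y) - y"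
      using mult_tree_fn_deriv[OF y] by simp
    also have "(self_power_series y - 1) * (1 - tree_fn y) = tree_fn y"
      using self_power_series_mult_one_minus_tree_fn[OF y] by (simp add: algebra_simps)
    finally show "y * h' y = h y"
      unfolding h_def by simp
  qed (use assms in \<open>simp_all add: h'_def\<close>)
  then show ?thesis
    unfolding h_def by simp
qed

lemma T1_eq_one_minus_exp_tree_fn:
  assumes "0 \<le> x" "x < exp (-1)"
  shows "T1 x = 1 - exp (- tree_fn x)"
proof -
  define m where "m y = T1 y - (1 - exp (- tree_fn y))" for y
  have deriv: "(m has_field_derivative
      self_power_series y - exp (- tree_fn y) * tree_fn_deriv y) (at y)" if "\<bar>y\<bar> < exp (-1)" for y
    unfolding m_def[abs_def]
    by (rule derivative_eq_intros has_field_derivative_T1[OF that]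
          has_field_derivative_tree_fn[OF that] refl | simp)+
  have deriv_eq_0: "exp (- tree_fn y) * tree_fn_deriv y = self_power_series y"
    if "0 < y" "y < exp (-1)" for y
  proof -
    have y: "\<bar>y\<bar> < exp (-1)" using that by simp
    have "exp (- tree_fn y) * tree_fn_deriv y * tree_fn y = y * tree_fn_deriv y"
      using tree_fn_mult_exp[of y] that by (simp add: algebra_simps)
    also have "\<dots> = self_power_series y * tree_fn y"
      using mult_tree_fn_deriv[OF y] self_power_series_mult_one_minus_tree_fn[OF y]
      by (simp add: algebra_simps)
    finally show ?thesis
      using tree_fn_pos[OF that] by simp
  qed
  have "m x = m 0"
  proof (cases "x = 0")
    case False
    with assms have "0 < x" by simp
    then show ?thesis
    proof (rule DERIV_isconst_end)
      show "continuous_on {0..x} m"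
        by (rule continuous_at_imp_continuous_on) (use assms in \<open>auto intro!: DERIV_isCont[OF deriv]\<close>)
      fix t :: real assume "0 < t" "t < x"
      then show "(m has_field_derivative 0) (at t)"
        using deriv[of t] deriv_eq_0[of t] assms by simp
    qed
  qed simp
  then show ?thesis
    unfolding m_def by simp
qed

lemma deriv_T1_condition_iff:
  assumes "0 < z" "z < exp (-1)"
  shows "z * deriv T1 z - T1 z = u \<longleftrightarrow> exp (- tree_fn z) = (1 + u) * (1 - tree_fn z)"
proof -
  have z: "\<bar>z\<bar> < exp (-1)"
    using assms by simp
  have less_1: "tree_fn z < 1"
    using tree_fn_less_1[of z] assms by simp
  have "z * deriv T1 z - T1 z =
      tree_fn z * exp (- tree_fn z) * self_power_series z - (1 - exp (- tree_fn z))"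
    using DERIV_imp_deriv[OF has_field_derivative_T1[OF z]] tree_fn_mult_exp[of z]
      T1_eq_one_minus_exp_tree_fn[of z] assms by simp
  also have "self_power_series z = 1 / (1 - tree_fn z)"
    using self_power_series_mult_one_minus_tree_fn[OF z] less_1 by (simp add: field_simps)
  also have "tree_fn z * exp (- tree_fn z) * (1 / (1 - tree_fn z)) - (1 - exp (- tree_fn z)) =
      exp (- tree_fn z) / (1 - tree_fn z) - 1"
    using less_1 by (simp add: field_simps)
  finally have condition: "z * deriv T1 z - T1 z = exp (- tree_fn z) / (1 - tree_fn z) - 1" .
  have "exp (- tree_fn z) / (1 - tree_fn z) - 1 = u \<longleftrightarrow> exp (- tree_fn z) / (1 - tree_fn z) = 1 + u"
    by linarith
  also have "\<dots> \<longleftrightarrow> exp (- tree_fn z) = (1 + u) * (1 - tree_fn z)"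
    using less_1 by (simp add: divide_eq_eq)
  finally show ?thesis
    unfolding condition .
qed

section \<open>Groeneveld's equation\<close>

lemma strict_mono_on_mult_exp_neg: "strict_mono_on {0..1} (\<lambda>x::real. x * exp (- x))"
proof (rule strict_mono_onI)
  fix a b :: real assume "a \<in> {0..1}" "b \<in> {0..1}" "a < b"
  then show "a * exp (- a) < b * exp (- b)"
  proof (intro DERIV_pos_imp_increasing_open[OF \<open>a < b\<close>] exI conjI)
    fix t assume "a < t" "t < b"
    show "((\<lambda>x. x * exp (- x)) has_field_derivative (1 - t) * exp (- t)) (at t)"
      by (rule derivative_eq_intros refl | simp)+ (simp add: algebra_simps)
    show "0 < (1 - t) * exp (- t)"
      using \<open>t < b\<close> \<open>b \<in> {0..1}\<close> by simp
  qed (intro continuous_intros)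
qed

lemma strict_mono_on_exp_neg_minus_affine:
  fixes u :: real
  assumes "u > 0"
  shows "strict_mono_on {0..} (\<lambda>t. exp (- t) - (1 + u) * (1 - t))"
proof (rule strict_mono_onI)
  fix a b :: real assume "a \<in> {0..}" "b \<in> {0..}" "a < b"
  then show "exp (- a) - (1 + u) * (1 - a) < exp (- b) - (1 + u) * (1 - b)"
  proof (intro DERIV_pos_imp_increasing[OF \<open>a < b\<close>] exI conjI)
    fix t assume "a \<le> t" "t \<le> b"
    show "((\<lambda>x. exp (- x) - (1 + u) * (1 - x)) has_field_derivative 1 + u - exp (- t)) (at t)"
      by (rule derivative_eq_intros refl | simp)+
    have "exp (- t) \<le> 1"
      using \<open>a \<le> t\<close> \<open>a \<in> {0..}\<close> by simp
    then show "0 < 1 + u - exp (- t)"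
      using assms by linarith
  qed
qed

lemma exp_neg_eq_affine_root:
  fixes u :: real
  assumes "u > 0"
  obtains s where "0 < s" "s < 1" "exp (- s) = (1 + u) * (1 - s)"
proof -
  define \<psi> where "\<psi> t = exp (- t) - (1 + u) * (1 - t)" for t
  have "\<exists>s. 0 \<le> s \<and> s \<le> 1 \<and> \<psi> s = 0"
    by (rule IVT') (use assms in \<open>auto simp: \<psi>_def intro!: continuous_intros\<close>)
  then obtain s where "0 \<le> s" "s \<le> 1" "\<psi> s = 0"
    by blast
  moreover have "s \<noteq> 0" "s \<noteq> 1"
    using \<open>\<psi> s = 0\<close> assms by (auto simp: \<psi>_def)
  ultimately show ?thesis
    by (intro that[of s]) (simp_all add: \<psi>_def)
qed

lemma mult_exp_neg_less_exp_neg_1: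
  fixes s :: real
  assumes "0 \<le> s" "s < 1"
  shows "s * exp (- s) < exp (- 1)"
  using strict_mono_onD[OF strict_mono_on_mult_exp_neg, of s 1] assms by simp

lemma tree_fn_mult_exp_neg:
  assumes "0 \<le> s" "s < 1"
  shows "tree_fn (s * exp (- s)) = s"
proof -
  let ?z = "s * exp (- s)"
  have z: "0 \<le> ?z" "?z < exp (- 1)"
    using mult_exp_neg_less_exp_neg_1[OF assms] assms by simp_all
  show ?thesis
    using strict_mono_on_eqD[OF strict_mono_on_mult_exp_neg, of "tree_fn ?z" s]
      tree_fn_mult_exp[OF z] tree_fn_less_1[OF z] tree_fn_nonneg[OF z] assms by simp
qed

lemma c_of_eq:
  fixes u s :: real
  assumes "u > 0" "0 < s" "s < 1" and root: "exp (- s) = (1 + u) * (1 - s)"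
  shows "c_of u = s * exp (- s) / u"
  unfolding c_of_def
proof (rule Least_equality)
  let ?z = "s * exp (- s)"
  have z: "0 < ?z" "?z < exp (- 1)"
    using mult_exp_neg_less_exp_neg_1[of s] assms(2,3) by simp_all
  have "exp (- tree_fn ?z) = (1 + u) * (1 - tree_fn ?z)"
    unfolding tree_fn_mult_exp_neg[OF less_imp_le[OF \<open>0 < s\<close>] \<open>s < 1\<close>] by (rule root)
  then have "?z * deriv T1 ?z - T1 ?z = u"
    using deriv_T1_condition_iff[OF z] by blast
  then show "0 < ?z / u \<and> 0 < u * (?z / u) \<and> u * (?z / u) < exp (-1) \<and>
      u * (?z / u) * deriv T1 (u * (?z / u)) - T1 (u * (?z / u)) = u"
    using z \<open>u > 0\<close> by simp
next
  fix c
  assume c: "0 < c \<and> 0 < u * c \<and> u * c < exp (-1) \<and> u * c * deriv T1 (u * c) - T1 (u * c) = u"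
  then have "exp (- tree_fn (u * c)) = (1 + u) * (1 - tree_fn (u * c))"
    using deriv_T1_condition_iff[of "u * c" u] by blast
  then have "exp (- tree_fn (u * c)) - (1 + u) * (1 - tree_fn (u * c)) = exp (- s) - (1 + u) * (1 - s)"
    using root by simp
  moreover have "tree_fn (u * c) \<in> {0..}" "s \<in> {0..}"
    using tree_fn_nonneg[of "u * c"] c \<open>0 < s\<close> by simp_all
  ultimately have "s = tree_fn (u * c)"
    by (rule strict_mono_on_eqD[OF strict_mono_on_exp_neg_minus_affine[OF \<open>u > 0\<close>]])
  then have "u * c = s * exp (- s)"
    using tree_fn_mult_exp[of "u * c"] c by simp
  then show "s * exp (- s) / u \<le> c"
    using \<open>u > 0\<close> by (simp add: field_simps)
qed

lemma alpha_of_eq: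
  fixes u s :: real
  assumes "0 < s" "s < 1" and root: "exp (- s) = (1 + u) * (1 - s)"
  shows "alpha_of u = 1 - s"
  unfolding alpha_of_def
proof (rule Least_equality)
  have "(1 - s) * exp (- (1 - s)) = (1 - s) / (exp (- s) * exp 1)"
    by (simp add: exp_diff exp_minus field_simps)
  also have "\<dots> = 1 / ((1 + u) * exp 1)"
    using assms by (simp add: root)
  finally have groeneveld: "(1 - s) * exp (- (1 - s)) = 1 / ((1 + u) * exp 1)" .
  then show "0 < 1 - s \<and> (1 - s) * exp (- (1 - s)) = 1 / ((1 + u) * exp 1)"
    using assms by simp
  fix a assume a: "0 < a \<and> a * exp (- a) = 1 / ((1 + u) * exp 1)"
  show "1 - s \<le> a"
  proof (rule ccontr)
    assume "\<not> 1 - s \<le> a"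
    then have "a * exp (- a) < (1 - s) * exp (- (1 - s))"
      using strict_mono_onD[OF strict_mono_on_mult_exp_neg, of a "1 - s"] a assms by simp
    with a groeneveld show False by simp
  qed
qed

theorem proposition5p3:
  fixes u :: real
  assumes "u > 0"
  shows "c_of u / (1 + T1 (u * c_of u) / u) = alpha_of u"
proof -
  obtain s where s: "0 < s" "s < 1" and root: "exp (- s) = (1 + u) * (1 - s)"
    using exp_neg_eq_affine_root[OF assms] .
  have c: "c_of u = s * exp (- s) / u" and alpha: "alpha_of u = 1 - s"
    using c_of_eq[OF assms s root] alpha_of_eq[OF s root] .
  have "T1 (u * c_of u) = 1 - exp (- s)"
    using T1_eq_one_minus_exp_tree_fn[of "s * exp (- s)"] tree_fn_mult_exp_neg[of s]
      mult_exp_neg_less_exp_neg_1[of s] c s assms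
    by simp
  also have "\<dots> = (1 + u) * s - u"
    using root by (simp add: algebra_simps)
  finally have "1 + T1 (u * c_of u) / u = (1 + u) * s / u"
    using assms by (simp add: field_simps)
  then have "c_of u / (1 + T1 (u * c_of u) / u) = (s * exp (- s)) / (s * (1 + u))"
    using c assms by (simp add: field_simps)
  also have "\<dots> = exp (- s) / (1 + u)"
    using s by simp
  also have "\<dots> = alpha_of u"
    using alpha root assms by simp
  finally show ?thesis .
qed

end
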